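(* (1) Assume $$\Big(\frac{\bar\kappa_4}{\bar\kappa_2^2}+\delta\Big)\int\frac{\mathbb E[Q(y\mid\mathsf Z)(\bar{\mathsf Z}^2-1)]^2}{\mathbb E[Q(y\mid\mathsf Z)]}\,dy>1 .$$ Then, taking $$\bar g(y)=\frac{\mathbb E[(\bar{\mathsf Z}^2-1)Q(y\mid\mathsf Z)]}{\mathbb E[Q(y\mid\mathsf Z)]}=\mathbb E[\bar{\mathsf Z}^2-1\mid\mathsf Y=y],$$ the corresponding preprocessing function achieves weak recovery in the sense that the criticality condition $\big(\frac{\bar\kappa_4}{\bar\kappa_2^2}+\delta\big)\mathbb E[\bar g(\mathsf Y)\bar{\mathsf Z}^2]^2>\mathbb E[\bar g(\mathsf Y)^2]$ holds. Furthermore, this $\bar g$ satisfies $\inf_{y\in\operatorname{supp}\mathsf Y}\bar g(y)>-\gamma$, $\mathbb E[\bar g(\mathsf Y)]=0$ and $\mathbb E[\bar g(\mathsf Y)\bar{\mathsf Z}^2]>0$ (with $\gamma=(\bar\kappa_4/\bar\kappa_2^2+\delta)\mathbb E[\bar g(\mathsf Y)\bar{\mathsf Z}^2]$), provided $\operatorname{Var}(\mathbb E[\bar{\mathsf Z}^2\mid\mathsf Y])=\mathbb E[\mathbb E[\bar{\mathsf Z}^2-1\mid\mathsf Y]^2]>0$. (2) Conversely, if some preprocessing function satisfying the preprocessing assumptions (see context) satisfies the criticality condition $\big(\frac{\bar\kappa_4}{\bar\kappa_2^2}+\delta\big)\mathbb E[\bar g(\mathsf Y)\bar{\mathsf Z}^2]^2>\mathbb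 E[\bar g(\mathsf Y)^2]$, then the displayed integral inequality in (1) holds.
   Context: Let $n/d\to\delta\in(0,\infty)$. Let $\mathsf L$ be a random variable compactly supported in $(0,\infty)$ with positive variance (the limiting singular value distribution of the design). $\mathsf L_n$ has the law of $\mathsf L$ if $\delta\le1$ and $\delta^{-1}\mathrm{law}(\mathsf L)+(1-\delta^{-1})\delta_0$ if $\delta>1$; $\bar m_{2k}=\mathbb E[\mathsf L_n^{2k}]$, $\bar\kappa_2=\bar m_2$, $\bar\kappa_4=\bar m_4-(1+\delta)\bar m_2^2$. Let $P_{\mathsf B}$ have mean $0$ and variance $\rho>0$, $\sigma^2=\bar\kappa_2\rho$, $\mathsf Z\sim\mathcal N(0,\sigma^2)$, $\bar{\mathsf Z}=\mathsf Z/\sigma$, and $\mathsf Y\sim Q(\cdot\mid\mathsf Z)$, where $Q(\cdot\mid z)$ is the conditional density of the response $y=q(z,\mathsf E)$ of the generalized linear model given the linear predictor $z$ (with noise $\mathsf E$ independent of $\mathsf Z$). Preprocessing assumptions: $\bar g:\mathbb R\to\mathbb R$ bounded above with $\mathbb E[\bar g(\mathsf Y)]=0$, $\mathbb E[\bar g(\mathsf Y)\bar{\mathsf Z}^2]>0$ and $\inf_{y\in\operatorname{supp}\mathsf Y}\bar g(y)>-\gamma$, where $\gamma=(\bar\kappa_4/\bar\kappa_2^2+\delta)\mathbb E[\bar g(\mathsf Y)\bar{\mathsf Z}^2]$; the preprocessing function is $\mathcal T(y)=\bar g(y)/(\bar g(y)+\gamma)$, and with $\mathsf T=\mathcal T(\mathsf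 Y)$ of law $\mu_{\mathsf T}$, $\lim_{x\searrow\sup\operatorname{supp}\mu_{\mathsf T}}\mathbb E[\mathsf T/(x-\mathsf T)]=\infty$. The spectral estimator is the top eigenvector of $X^\top\operatorname{diag}(\mathcal T(y))X$; the criticality condition is the condition for its asymptotic overlap with the signal to be positive. *)

theory Defs
  imports "HOL-Probability.Probability"
begin

text \<open>Moments of L_n, whose law is law(L) if delta \<le> 1 and
  (1/delta) law(L) + (1 - 1/delta) Dirac_0 if delta > 1.  Since the atom at 0
  contributes nothing to positive moments, E[L_n^(2k)] (k \<ge> 1) is the
  following (written out literally).\<close>
definition mbar :: "real \<Rightarrow> real measure \<Rightarrow> nat \<Rightarrow> real" where
  "mbar \<delta> L k = (if \<delta> \<le> 1 then 1 else 1 / \<delta>) * (\<integral>l. l ^ (2 * k) \<partial>L)"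

definition kappa2 :: "real \<Rightarrow> real measure \<Rightarrow> real" where
  "kappa2 \<delta> L = mbar \<delta> L 1"

definition kappa4 :: "real \<Rightarrow> real measure \<Rightarrow> real" where
  "kappa4 \<delta> L = mbar \<delta> L 2 - (1 + \<delta>) * (mbar \<delta> L 1)^2"

definition cst :: "real \<Rightarrow> real measure \<Rightarrow> real" where
  "cst \<delta> L = kappa4 \<delta> L / (kappa2 \<delta> L)^2 + \<delta>"

definition sig :: "real \<Rightarrow> real measure \<Rightarrow> real \<Rightarrow> real" where
  "sig \<delta> L \<rho> = sqrt (kappa2 \<delta> L * \<rho>)"

text \<open>Q z y is the conditional density of Y at y given Z = z. Z = s * Zbar with
  Zbar standard Gaussian; expectations over Z are integrals against the standard
  normal density in the variable Zbar.\<close>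

definition EQ :: "(real \<Rightarrow> real \<Rightarrow> real) \<Rightarrow> real \<Rightarrow> real \<Rightarrow> real" where
  "EQ Q s y = (\<integral>x. Q (s * x) y * std_normal_density x \<partial>lborel)"

definition EQZ :: "(real \<Rightarrow> real \<Rightarrow> real) \<Rightarrow> real \<Rightarrow> real \<Rightarrow> real" where
  "EQZ Q s y = (\<integral>x. (x^2 - 1) * Q (s * x) y * std_normal_density x \<partial>lborel)"

definition gopt :: "(real \<Rightarrow> real \<Rightarrow> real) \<Rightarrow> real \<Rightarrow> real \<Rightarrow> real" where
  "gopt Q s y = EQZ Q s y / EQ Q s y"

definition Iopt :: "(real \<Rightarrow> real \<Rightarrow> real) \<Rightarrow> real \<Rightarrow> real" where
  "Iopt Q s = (\<integral>y. (EQZ Q s y)^2 / EQ Q s y \<partial>lborel)"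

definition lawY :: "(real \<Rightarrow> real \<Rightarrow> real) \<Rightarrow> real \<Rightarrow> real measure" where
  "lawY Q s = density lborel (\<lambda>y. ennreal (EQ Q s y))"

definition EY :: "(real \<Rightarrow> real \<Rightarrow> real) \<Rightarrow> real \<Rightarrow> (real \<Rightarrow> real) \<Rightarrow> real" where
  "EY Q s f = (\<integral>y. f y * EQ Q s y \<partial>lborel)"

text \<open>E[g(Y) Zbar^2], (Zbar, Y) having joint density phi(x) Q(s x, y).\<close>
definition EgZ2 :: "(real \<Rightarrow> real \<Rightarrow> real) \<Rightarrow> real \<Rightarrow> (real \<Rightarrow> real) \<Rightarrow> real" where
  "EgZ2 Q s g = (\<integral>y. (\<integral>x. g y * x^2 * Q (s * x) y * std_normal_density x \<partial>lborel) \<partial>lborel)"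

definition msupp :: "real measure \<Rightarrow> real set" where
  "msupp M = {y. \<forall>e>0. emeasure M (ball y e) > 0}"

definition gam :: "real \<Rightarrow> real measure \<Rightarrow> real \<Rightarrow> (real \<Rightarrow> real \<Rightarrow> real) \<Rightarrow> (real \<Rightarrow> real) \<Rightarrow> real" where
  "gam \<delta> L \<rho> Q g = cst \<delta> L * EgZ2 Q (sig \<delta> L \<rho>) g"

text \<open>inf over supp Y of g is > - gamma (written out: some lower bound > -gamma).\<close>
definition inf_cond :: "real \<Rightarrow> real measure \<Rightarrow> real \<Rightarrow> (real \<Rightarrow> real \<Rightarrow> real) \<Rightarrow> (real \<Rightarrow> real) \<Rightarrow> bool" where
  "inf_cond \<delta> L \<rho> Q g \<longleftrightarrow>
     (\<exists>m > - gam \<delta> L \<rho> Q g. \<forall>y \<in> msupp (lawY Q (sig \<delta> L \<rho>)). m \<le> g y)"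

definition Tfun :: "real \<Rightarrow> real measure \<Rightarrow> real \<Rightarrow> (real \<Rightarrow> real \<Rightarrow> real) \<Rightarrow> (real \<Rightarrow> real) \<Rightarrow> real \<Rightarrow> real" where
  "Tfun \<delta> L \<rho> Q g y = g y / (g y + gam \<delta> L \<rho> Q g)"

definition preproc :: "real \<Rightarrow> real measure \<Rightarrow> real \<Rightarrow> (real \<Rightarrow> real \<Rightarrow> real) \<Rightarrow> (real \<Rightarrow> real) \<Rightarrow> bool" where
  "preproc \<delta> L \<rho> Q g \<longleftrightarrow>
     (let s = sig \<delta> L \<rho>; T = Tfun \<delta> L \<rho> Q g;
          muT = distr (lawY Q s) borel T in
      g \<in> borel_measurable borel \<and>
      (\<exists>M. \<forall>y. g y \<le> M) \<and>
      EY Q s g = 0 \<and>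
      EgZ2 Q s g > 0 \<and>
      inf_cond \<delta> L \<rho> Q g \<and>
      filterlim (\<lambda>x. EY Q s (\<lambda>y. T y / (x - T y))) at_top (at_right (Sup (msupp muT))))"

definition critical :: "real \<Rightarrow> real measure \<Rightarrow> real \<Rightarrow> (real \<Rightarrow> real \<Rightarrow> real) \<Rightarrow> (real \<Rightarrow> real) \<Rightarrow> bool" where
  "critical \<delta> L \<rho> Q g \<longleftrightarrow>
     cst \<delta> L * (EgZ2 Q (sig \<delta> L \<rho>) g)^2 > EY Q (sig \<delta> L \<rho>) (\<lambda>y. (g y)^2)"

end

theory Submission
  imports Defs
begin

(* Write p(y) = E[Q(y|Z)] for the density of Y and q(y) = E[Q(y|Z)(Zbar^2 - 1)], so that the
   candidate preprocessing is gopt = q/p.  Since each Q(z, .) is a probability density, Fubini for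
   the joint density phi(x) Q(s x, y) of (Zbar, Y) shows that p and q are integrable with total
   masses 1 and 0, and that E[g(Y) Zbar^2] = E[g(Y)] + int g q.  Pointwise Cauchy-Schwarz in x gives
   q^2 <= p E[Q(y|Z)(Zbar^2 - 1)^2], so q vanishes where p does and q^2/p is integrable.
   Consequently E[gopt(Y)] = 0 and E[gopt(Y) Zbar^2] = E[gopt(Y)^2] = I := int q^2/p, which makes
   the criticality of gopt equivalent to cst I > 1; moreover gopt >= -1 > -gamma.
   Conversely, for a centred g that is bounded on the support of Y, E[g(Y) Zbar^2] = E[g(Y) gopt(Y)],
   and Cauchy-Schwarz in L^2(law Y) bounds its square by E[g(Y)^2] I, so criticality of g forces
   cst I > 1.  Only the value of cst enters, so none of the hypotheses on L are needed. *)

lemma sq_le_mult_if_quadratic_nonneg: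
  fixes a b c :: real
  assumes nonneg: "\<And>t. 0 \<le> t^2 * a - 2 * t * b + c" and "a \<ge> 0"
  shows "b^2 \<le> a * c"
proof (cases "a = 0")
  case True
  have "b = 0"
  proof (rule ccontr)
    assume "b \<noteq> 0"
    have "0 \<le> ((c + 1) / (2 * b))^2 * a - 2 * ((c + 1) / (2 * b)) * b + c" by (rule nonneg)
    also have "\<dots> = -1" using True \<open>b \<noteq> 0\<close> by (simp add: field_simps)
    finally show False by simp
  qed
  then show ?thesis using True by simp
next
  case False
  then have "a > 0" using \<open>a \<ge> 0\<close> by simp
  have "0 \<le> (b / a)^2 * a - 2 * (b / a) * b + c" by (rule nonneg)
  also have "\<dots> = c - b^2 / a" using \<open>a > 0\<close> by (simp add: field_simps power2_eq_square)
  finally show ?thesis using \<open>a > 0\<close> by (simp add: field_simps mult.commute)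
qed

lemma integrable_mult_if_square_integrable:
  fixes f h w :: "'a \<Rightarrow> real"
  assumes [measurable]: "f \<in> borel_measurable M" "h \<in> borel_measurable M" "w \<in> borel_measurable M"
    and w_nonneg: "AE x in M. 0 \<le> w x"
    and "integrable M (\<lambda>x. (f x)^2 * w x)" "integrable M (\<lambda>x. (h x)^2 * w x)"
  shows "integrable M (\<lambda>x. f x * h x * w x)"
proof (rule Bochner_Integration.integrable_bound)
  show "integrable M (\<lambda>x. (f x)^2 * w x + (h x)^2 * w x)"
    using assms by simp
  show "AE x in M. norm (f x * h x * w x) \<le> norm ((f x)^2 * w x + (h x)^2 * w x)"
    using w_nonneg
  proof eventually_elim
    case (elim x)
    have "2 * (\<bar>f x\<bar> * \<bar>h x\<bar>) \<le> (f x)^2 + (h x)^2"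
      using sum_squares_bound[of "\<bar>f x\<bar>" "\<bar>h x\<bar>"] by (simp add: mult.assoc)
    moreover have "0 \<le> \<bar>f x\<bar> * \<bar>h x\<bar>" by simp
    ultimately have "\<bar>f x * h x\<bar> \<le> (f x)^2 + (h x)^2"
      unfolding abs_mult by linarith
    then show ?case
      using elim by (simp add: abs_mult distrib_right[symmetric] mult_right_mono)
  qed
qed measurable

lemma Cauchy_Schwarz_weighted_integral:
  fixes f h w :: "'a \<Rightarrow> real"
  assumes [measurable]: "f \<in> borel_measurable M" "h \<in> borel_measurable M" "w \<in> borel_measurable M"
    and w_nonneg: "AE x in M. 0 \<le> w x"
    and f2: "integrable M (\<lambda>x. (f x)^2 * w x)" and h2: "integrable M (\<lambda>x. (h x)^2 * w x)"
  shows "(\<integral>x. f x * h x * w x \<partial>M)^2 \<le> (\<integral>x. (f x)^2 * w x \<partial>M) * (\<integral>x. (h x)^2 * w x \<partial>M)"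
proof (rule sq_le_mult_if_quadratic_nonneg)
  have fh: "integrable M (\<lambda>x. f x * h x * w x)"
    by (rule integrable_mult_if_square_integrable[OF assms])
  fix t :: real
  have "0 \<le> (\<integral>x. (t * f x - h x)^2 * w x \<partial>M)"
    using w_nonneg by (intro integral_nonneg_AE) (auto elim: AE_mp)
  also have "\<dots> = (\<integral>x. t^2 * ((f x)^2 * w x) - 2 * t * (f x * h x * w x) + (h x)^2 * w x \<partial>M)"
    by (rule Bochner_Integration.integral_cong) (simp_all add: power2_eq_square algebra_simps)
  also have "\<dots> = t^2 * (\<integral>x. (f x)^2 * w x \<partial>M) - 2 * t * (\<integral>x. f x * h x * w x \<partial>M)
      + (\<integral>x. (h x)^2 * w x \<partial>M)"
    using f2 h2 fh by simp
  finally show "0 \<le> t^2 * (\<integral>x. (f x)^2 * w x \<partial>M) - 2 * t * (\<integral>x. f x * h x * w x \<partial>M)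
      + (\<integral>x. (h x)^2 * w x \<partial>M)" .
  show "0 \<le> (\<integral>x. (f x)^2 * w x \<partial>M)"
    using w_nonneg by (intro integral_nonneg_AE) (auto elim: AE_mp)
qed

lemma integrable_mult_if_bounded_on_support:
  fixes g w :: "'a \<Rightarrow> real"
  assumes "integrable M w" "g \<in> borel_measurable M"
    and bounded: "AE x in M. w x \<noteq> 0 \<longrightarrow> \<bar>g x\<bar> \<le> K"
  shows "integrable M (\<lambda>x. g x * w x)"
proof (rule Bochner_Integration.integrable_bound)
  show "integrable M (\<lambda>x. K * w x)" using assms by simp
  show "AE x in M. norm (g x * w x) \<le> norm (K * w x)"
    using bounded
  proof eventually_elim
    case (elim x)
    then show ?case
      by (cases "w x = 0") (auto simp: abs_mult mult_right_mono)
  qed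
qed (use assms in measurable)

lemma AE_in_msupp:
  fixes M :: "real measure"
  assumes sets_M: "sets M = sets borel"
  shows "AE y in M. y \<in> msupp M"
proof -
  define F where "F = {ball y e | y e. e > 0 \<and> emeasure M (ball y e) = 0}"
  obtain F' where F': "F' \<subseteq> F" "countable F'" "\<Union>F' = \<Union>F"
    using Lindelof[of F] unfolding F_def by auto
  have "(\<Union>B\<in>F'. B) \<in> null_sets M"
  proof (rule null_sets_UN'[OF \<open>countable F'\<close>])
    fix B assume "B \<in> F'"
    with F'(1) obtain y e where "B = ball y e" "emeasure M (ball y e) = 0"
      unfolding F_def by blast
    then show "B \<in> null_sets M" using sets_M by (auto intro: null_setsI)
  qed
  then show ?thesis
  proof (rule AE_I')
    show "{y \<in> space M. y \<notin> msupp M} \<subseteq> (\<Union>B\<in>F'. B)"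
    proof
      fix y assume "y \<in> {y \<in> space M. y \<notin> msupp M}"
      then obtain e where "e > 0" "\<not> emeasure M (ball y e) > 0"
        unfolding msupp_def by auto
      then have "ball y e \<in> F" unfolding F_def by (auto simp: not_less)
      moreover have "y \<in> ball y e" using \<open>e > 0\<close> by simp
      ultimately show "y \<in> (\<Union>B\<in>F'. B)" using F'(3) by blast
    qed
  qed
qed

lemma std_normal_moments:
  shows integrable_std_normal: "integrable lborel std_normal_density"
    and integral_std_normal: "(\<integral>x. std_normal_density x \<partial>lborel) = 1"
    and integrable_std_normal_sq: "integrable lborel (\<lambda>x. x^2 * std_normal_density x)"
    and integral_std_normal_sq: "(\<integral>x. x^2 * std_normal_density x \<partial>lborel) = 1"
    and integrable_std_normal_pow4: "integrable lborel (\<lambda>x. x^4 * std_normal_density x)"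
  using integrable_std_normal_moment[of 0] integral_std_normal_moment_even[of 0]
    integrable_std_normal_moment[of 2] integral_std_normal_moment_even[of 1]
    integrable_std_normal_moment[of 4]
  by (simp_all add: mult.commute)

lemma std_normal_sq_minus_one:
  shows integrable_std_normal_sq_minus_one:
      "integrable lborel (\<lambda>x. (x^2 - 1) * std_normal_density x)"
    and integral_std_normal_sq_minus_one:
      "(\<integral>x. (x^2 - 1) * std_normal_density x \<partial>lborel) = 0"
    and integrable_std_normal_sq_minus_one_sq:
      "integrable lborel (\<lambda>x. (x^2 - 1)^2 * std_normal_density x)"
proof -
  have "(\<lambda>x. (x^2 - 1)^2 * std_normal_density x)
      = (\<lambda>x. x^4 * std_normal_density x - 2 * (x^2 * std_normal_density x) + std_normal_density x)"
    by (simp add: eval_nat_numeral algebra_simps)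
  then show "integrable lborel (\<lambda>x. (x^2 - 1)^2 * std_normal_density x)"
    using std_normal_moments by simp
qed (use std_normal_moments in \<open>simp_all add: left_diff_distrib\<close>)

locale glm =
  fixes Q :: "real \<Rightarrow> real \<Rightarrow> real" and s :: real
  assumes Q_meas: "(\<lambda>(z, y). Q z y) \<in> borel_measurable borel"
    and Q_nonneg: "\<And>z y. Q z y \<ge> 0"
    and Q_dens: "\<And>z. (\<integral>\<^sup>+ y. ennreal (Q z y) \<partial>lborel) = 1"
begin

abbreviation "p y \<equiv> EQ Q s y"
abbreviation "q y \<equiv> EQZ Q s y"

lemma measurable_Q[measurable (raw)]:
  assumes "f \<in> borel_measurable M" "g \<in> borel_measurable M"
  shows "(\<lambda>x. Q (f x) (g x)) \<in> borel_measurable M"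
proof -
  have "(\<lambda>(z, y). Q z y) \<in> borel_measurable (borel \<Otimes>\<^sub>M borel)"
    using Q_meas by (simp add: borel_prod)
  from measurable_comp[OF _ this, of "\<lambda>x. (f x, g x)"] show ?thesis
    using assms by (simp add: o_def)
qed

lemma integral_Q: "(\<integral>y. Q z y \<partial>lborel) = 1"
proof -
  have "has_bochner_integral lborel (\<lambda>y. Q z y) 1"
    using Q_dens[of z] Q_nonneg by (intro has_bochner_integral_nn_integral) auto
  then show ?thesis by (simp add: has_bochner_integral_iff)
qed

lemma nn_integral_joint_density:
  assumes [measurable]: "h \<in> borel_measurable borel"
  shows "(\<integral>\<^sup>+(y, x). ennreal (\<bar>h x\<bar> * Q (s * x) y * std_normal_density x) \<partial>(lborel \<Otimes>\<^sub>M lborel))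
       = (\<integral>\<^sup>+x. ennreal (\<bar>h x\<bar> * std_normal_density x) \<partial>lborel)"
proof -
  have "(\<integral>\<^sup>+(y, x). ennreal (\<bar>h x\<bar> * Q (s * x) y * std_normal_density x) \<partial>(lborel \<Otimes>\<^sub>M lborel))
      = (\<integral>\<^sup>+y. \<integral>\<^sup>+x. ennreal (\<bar>h x\<bar> * Q (s * x) y * std_normal_density x) \<partial>lborel \<partial>lborel)"
    by (subst lborel.nn_integral_fst[symmetric]) auto
  also have "\<dots> = (\<integral>\<^sup>+x. \<integral>\<^sup>+y. ennreal (\<bar>h x\<bar> * Q (s * x) y * std_normal_density x) \<partial>lborel \<partial>lborel)"
    by (rule lborel_pair.Fubini'[where f="\<lambda>x y. ennreal (\<bar>h x\<bar> * Q (s * x) y * std_normal_density x)"])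
      measurable
  also have "\<dots> = (\<integral>\<^sup>+x. \<integral>\<^sup>+y. ennreal (\<bar>h x\<bar> * std_normal_density x) * ennreal (Q (s * x) y)
      \<partial>lborel \<partial>lborel)"
    by (intro nn_integral_cong) (simp add: ennreal_mult'[symmetric] Q_nonneg mult_ac)
  also have "\<dots> = (\<integral>\<^sup>+x. ennreal (\<bar>h x\<bar> * std_normal_density x) \<partial>lborel)"
    by (intro nn_integral_cong) (simp add: nn_integral_cmult Q_dens)
  finally show ?thesis .
qed

lemma marginal_Y:
  fixes h :: "real \<Rightarrow> real"
  assumes [measurable]: "h \<in> borel_measurable borel"
    and h_int: "integrable lborel (\<lambda>x. h x * std_normal_density x)"
  shows AE_integrable_joint_density:
      "AE y in lborel. integrable lborel (\<lambda>x. h x * Q (s * x) y * std_normal_density x)"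
    and integrable_marginal_Y:
      "integrable lborel (\<lambda>y. \<integral>x. h x * Q (s * x) y * std_normal_density x \<partial>lborel)"
    and integral_marginal_Y:
      "(\<integral>y. \<integral>x. h x * Q (s * x) y * std_normal_density x \<partial>lborel \<partial>lborel)
         = (\<integral>x. h x * std_normal_density x \<partial>lborel)"
proof -
  have joint: "integrable (lborel \<Otimes>\<^sub>M lborel) (\<lambda>(y, x). h x * Q (s * x) y * std_normal_density x)"
    unfolding integrable_iff_bounded
  proof
    have "(\<integral>\<^sup>+(y, x). ennreal (norm (h x * Q (s * x) y * std_normal_density x)) \<partial>(lborel \<Otimes>\<^sub>M lborel))
        = (\<integral>\<^sup>+(y, x). ennreal (\<bar>h x\<bar> * Q (s * x) y * std_normal_density x) \<partial>(lborel \<Otimes>\<^sub>M lborel))"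
      by (intro nn_integral_cong) (auto simp: abs_mult Q_nonneg)
    also have "\<dots> = (\<integral>\<^sup>+x. ennreal (norm (h x * std_normal_density x)) \<partial>lborel)"
      by (simp add: nn_integral_joint_density abs_mult)
    also have "\<dots> < \<infinity>" using h_int by (simp add: integrable_iff_bounded)
    finally show "(\<integral>\<^sup>+z. ennreal (norm ((\<lambda>(y, x). h x * Q (s * x) y * std_normal_density x) z))
        \<partial>(lborel \<Otimes>\<^sub>M lborel)) < \<infinity>"
      by (simp add: case_prod_beta')
  qed measurable
  show "AE y in lborel. integrable lborel (\<lambda>x. h x * Q (s * x) y * std_normal_density x)"
    using lborel_pair.AE_integrable_fst[OF joint] by simp
  show "integrable lborel (\<lambda>y. \<integral>x. h x * Q (s * x) y * std_normal_density x \<partial>lborel)"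
    using lborel_pair.integrable_fst[OF joint] by simp
  have "(\<integral>y. \<integral>x. h x * Q (s * x) y * std_normal_density x \<partial>lborel \<partial>lborel)
      = (\<integral>x. \<integral>y. (h x * std_normal_density x) * Q (s * x) y \<partial>lborel \<partial>lborel)"
    using lborel_pair.Fubini_integral[OF joint] by (simp add: mult_ac)
  also have "\<dots> = (\<integral>x. h x * std_normal_density x \<partial>lborel)"
    by (simp add: integral_Q)
  finally show "(\<integral>y. \<integral>x. h x * Q (s * x) y * std_normal_density x \<partial>lborel \<partial>lborel)
      = (\<integral>x. h x * std_normal_density x \<partial>lborel)" .
qed

lemma p_nonneg: "p y \<ge> 0"
  unfolding EQ_def by (rule Bochner_Integration.integral_nonneg) (simp add: Q_nonneg)

lemma measurable_p[measurable]: "p \<in> borel_measurable lborel"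
  unfolding EQ_def by measurable

lemma measurable_q[measurable]: "q \<in> borel_measurable lborel"
  unfolding EQZ_def by measurable

lemma integrable_p: "integrable lborel p"
  using integrable_marginal_Y[of "\<lambda>_. 1"] integrable_std_normal by (simp add: EQ_def)

lemma integrable_q: "integrable lborel q" and integral_q: "(\<integral>y. q y \<partial>lborel) = 0"
  using integrable_marginal_Y[of "\<lambda>x. x^2 - 1"] integral_marginal_Y[of "\<lambda>x. x^2 - 1"]
    std_normal_sq_minus_one
  by (simp_all add: EQZ_def)

lemma AE_integrable_sections:
  "AE y in lborel. integrable lborel (\<lambda>x. Q (s * x) y * std_normal_density x)
     \<and> integrable lborel (\<lambda>x. (x^2 - 1) * Q (s * x) y * std_normal_density x)
     \<and> integrable lborel (\<lambda>x. (x^2 - 1)^2 * Q (s * x) y * std_normal_density x)"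
proof -
  have "AE y in lborel. integrable lborel (\<lambda>x. Q (s * x) y * std_normal_density x)"
    using AE_integrable_joint_density[of "\<lambda>_. 1"] integrable_std_normal by simp
  moreover have "AE y in lborel. integrable lborel (\<lambda>x. (x^2 - 1) * Q (s * x) y * std_normal_density x)"
    using AE_integrable_joint_density[of "\<lambda>x. x^2 - 1"] integrable_std_normal_sq_minus_one by simp
  moreover have "AE y in lborel.
      integrable lborel (\<lambda>x. (x^2 - 1)^2 * Q (s * x) y * std_normal_density x)"
    using AE_integrable_joint_density[of "\<lambda>x. (x^2 - 1)^2"] integrable_std_normal_sq_minus_one_sq
    by simp
  ultimately show ?thesis by eventually_elim blast
qed

lemma AE_q_sq_le:
  "AE y in lborel. (q y)^2 \<le> p y * (\<integral>x. (x^2 - 1)^2 * Q (s * x) y * std_normal_density x \<partial>lborel)"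
  using AE_integrable_sections
proof eventually_elim
  case (elim y)
  let ?w = "\<lambda>x. Q (s * x) y * std_normal_density x"
  have "(\<integral>x. 1 * (x^2 - 1) * ?w x \<partial>lborel)^2
      \<le> (\<integral>x. 1^2 * ?w x \<partial>lborel) * (\<integral>x. (x^2 - 1)^2 * ?w x \<partial>lborel)"
    using elim by (intro Cauchy_Schwarz_weighted_integral) (auto simp: Q_nonneg mult_ac)
  then show ?case by (simp add: EQ_def EQZ_def mult_ac)
qed

lemma AE_q_eq_0_if_p_eq_0: "AE y in lborel. p y = 0 \<longrightarrow> q y = 0"
  using AE_q_sq_le by eventually_elim auto

lemma integrable_q_sq_div_p: "integrable lborel (\<lambda>y. (q y)^2 / p y)"
proof (rule Bochner_Integration.integrable_bound)
  show "integrable lborel (\<lambda>y. \<integral>x. (x^2 - 1)^2 * Q (s * x) y * std_normal_density x \<partial>lborel)"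
    using integrable_marginal_Y[of "\<lambda>x. (x^2 - 1)^2"] integrable_std_normal_sq_minus_one_sq by simp
  show "AE y in lborel. norm ((q y)^2 / p y)
      \<le> norm (\<integral>x. (x^2 - 1)^2 * Q (s * x) y * std_normal_density x \<partial>lborel)"
    using AE_q_sq_le
  proof eventually_elim
    case (elim y)
    have "0 \<le> (\<integral>x. (x^2 - 1)^2 * Q (s * x) y * std_normal_density x \<partial>lborel)"
      by (rule Bochner_Integration.integral_nonneg) (simp add: Q_nonneg)
    with elim p_nonneg[of y] show ?case
      by (cases "p y = 0") (simp_all add: field_simps mult.commute)
  qed
qed measurable

lemma Iopt_nonneg: "Iopt Q s \<ge> 0"
  unfolding Iopt_def by (rule Bochner_Integration.integral_nonneg) (simp add: p_nonneg)

lemma measurable_gopt[measurable]: "gopt Q s \<in> borel_measurable borel"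
  unfolding gopt_def by (simp flip: measurable_lborel1)

lemma EgZ2_eq_integral:
  assumes [measurable]: "g \<in> borel_measurable borel"
  shows "EgZ2 Q s g = (\<integral>y. g y * (q y + p y) \<partial>lborel)"
  unfolding EgZ2_def
proof (rule integral_cong_AE)
  show "AE y in lborel. (\<integral>x. g y * x^2 * Q (s * x) y * std_normal_density x \<partial>lborel)
      = g y * (q y + p y)"
    using AE_integrable_sections
  proof eventually_elim
    case (elim y)
    have "(\<integral>x. g y * x^2 * Q (s * x) y * std_normal_density x \<partial>lborel)
        = g y * (\<integral>x. (x^2 - 1) * Q (s * x) y * std_normal_density x
            + Q (s * x) y * std_normal_density x \<partial>lborel)"
      by (simp add: algebra_simps)
    also have "\<dots> = g y * (q y + p y)"
      using elim by (simp add: EQ_def EQZ_def)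
    finally show ?case .
  qed
qed measurable

lemma p_gopt_eq_q: "AE y in lborel. gopt Q s y * p y = q y"
  using AE_q_eq_0_if_p_eq_0 by eventually_elim (auto simp: gopt_def)

lemma EY_gopt: "EY Q s (gopt Q s) = 0"
proof -
  have "EY Q s (gopt Q s) = (\<integral>y. q y \<partial>lborel)"
    unfolding EY_def using p_gopt_eq_q by (intro integral_cong_AE) measurable
  then show ?thesis using integral_q by simp
qed

lemma gopt_sq_mult_p: "(gopt Q s y)^2 * p y = (q y)^2 / p y"
  by (cases "p y = 0") (simp_all add: gopt_def power2_eq_square)

lemma integrable_gopt_sq: "integrable lborel (\<lambda>y. (gopt Q s y)^2 * p y)"
  unfolding gopt_sq_mult_p by (rule integrable_q_sq_div_p)

lemma EY_gopt_sq: "EY Q s (\<lambda>y. (gopt Q s y)^2) = Iopt Q s"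
  unfolding EY_def Iopt_def gopt_sq_mult_p ..

lemma EgZ2_gopt: "EgZ2 Q s (gopt Q s) = Iopt Q s"
proof -
  have "AE y in lborel. gopt Q s y * (q y + p y) = (q y)^2 / p y + q y"
    using AE_q_eq_0_if_p_eq_0 by eventually_elim (auto simp: gopt_def field_simps power2_eq_square)
  then have "EgZ2 Q s (gopt Q s) = (\<integral>y. (q y)^2 / p y + q y \<partial>lborel)"
    unfolding EgZ2_eq_integral[OF measurable_gopt] by (intro integral_cong_AE) measurable
  also have "\<dots> = Iopt Q s"
    using integrable_q_sq_div_p integrable_q integral_q by (simp add: Iopt_def)
  finally show ?thesis .
qed

lemma gopt_ge_minus_one: "gopt Q s y \<ge> -1"
proof (cases "p y = 0")
  case False
  then have "p y > 0" using p_nonneg[of y] by simp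
  then have Qy_int: "integrable lborel (\<lambda>x. Q (s * x) y * std_normal_density x)"
    using not_integrable_integral_eq unfolding EQ_def by fastforce
  have "- p y \<le> q y"
  proof (cases "integrable lborel (\<lambda>x. (x^2 - 1) * Q (s * x) y * std_normal_density x)")
    case True
    have "- p y = (\<integral>x. - (Q (s * x) y * std_normal_density x) \<partial>lborel)"
      by (simp add: EQ_def)
    also have "\<dots> \<le> q y"
      unfolding EQZ_def using Qy_int True
      by (intro integral_mono) (auto simp: algebra_simps Q_nonneg)
    finally show ?thesis .
  next
    case False
    then show ?thesis using \<open>p y > 0\<close> by (simp add: EQZ_def not_integrable_integral_eq)
  qed
  then show ?thesis using \<open>p y > 0\<close> by (simp add: gopt_def field_simps)
qed (simp add: gopt_def)

lemma AE_in_msupp_lawY: "AE y in lborel. p y > 0 \<longrightarrow> y \<in> msupp (lawY Q s)"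
proof -
  have "AE y in lawY Q s. y \<in> msupp (lawY Q s)"
    by (rule AE_in_msupp) (simp add: lawY_def)
  then show ?thesis
    unfolding lawY_def by (subst (asm) AE_density) auto
qed

lemma EgZ2_eq_EY_mult_gopt:
  assumes [measurable]: "g \<in> borel_measurable borel"
    and g_int: "integrable lborel (\<lambda>y. g y * p y)"
    and g_sq_int: "integrable lborel (\<lambda>y. (g y)^2 * p y)"
    and centred: "EY Q s g = 0"
  shows "EgZ2 Q s g = (\<integral>y. g y * gopt Q s y * p y \<partial>lborel)"
proof -
  have g_gopt_int: "integrable lborel (\<lambda>y. g y * gopt Q s y * p y)"
    using g_sq_int integrable_gopt_sq p_nonneg by (intro integrable_mult_if_square_integrable) auto
  have "AE y in lborel. g y * (q y + p y) = g y * gopt Q s y * p y + g y * p y"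
    using p_gopt_eq_q by eventually_elim (simp add: algebra_simps)
  then have "EgZ2 Q s g = (\<integral>y. g y * gopt Q s y * p y + g y * p y \<partial>lborel)"
    unfolding EgZ2_eq_integral[OF assms(1)] by (intro integral_cong_AE) measurable
  also have "\<dots> = (\<integral>y. g y * gopt Q s y * p y \<partial>lborel)"
    using g_gopt_int g_int centred by (simp add: EY_def)
  finally show ?thesis .
qed

lemma one_lt_Iopt_if_critical:
  assumes [measurable]: "g \<in> borel_measurable borel"
    and bounded: "AE y in lborel. p y > 0 \<longrightarrow> \<bar>g y\<bar> \<le> K"
    and centred: "EY Q s g = 0" and EgZ2_pos: "EgZ2 Q s g > 0"
    and critical: "c * (EgZ2 Q s g)^2 > EY Q s (\<lambda>y. (g y)^2)"
  shows "c * Iopt Q s > 1"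
proof -
  have bounded': "AE y in lborel. p y \<noteq> 0 \<longrightarrow> \<bar>g y\<bar> \<le> K"
    using bounded p_nonneg by (auto elim: AE_mp simp: less_le)
  have g_int: "integrable lborel (\<lambda>y. g y * p y)"
    using bounded' integrable_p by (intro integrable_mult_if_bounded_on_support) auto
  have g_sq_int: "integrable lborel (\<lambda>y. (g y)^2 * p y)"
  proof (rule integrable_mult_if_bounded_on_support[OF integrable_p])
    show "AE y in lborel. p y \<noteq> 0 \<longrightarrow> \<bar>(g y)^2\<bar> \<le> K^2"
      using bounded' by eventually_elim (metis abs_ge_zero abs_power2 power2_abs power_mono)
  qed measurable
  define A where "A = EgZ2 Q s g"
  define B where "B = EY Q s (\<lambda>y. (g y)^2)"
  define I where "I = Iopt Q s"
  have CS: "A^2 \<le> B * I"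
    unfolding A_def B_def I_def EgZ2_eq_EY_mult_gopt[OF assms(1) g_int g_sq_int centred]
      EY_gopt_sq[symmetric] EY_def
    using g_sq_int integrable_gopt_sq p_nonneg by (intro Cauchy_Schwarz_weighted_integral) auto
  have "A > 0" "B < c * A^2"
    using EgZ2_pos critical by (simp_all add: A_def B_def)
  have "B \<ge> 0"
    unfolding B_def EY_def by (rule Bochner_Integration.integral_nonneg) (simp add: p_nonneg)
  have "I > 0"
  proof (rule ccontr)
    assume "\<not> I > 0"
    then have "I = 0" using Iopt_nonneg by (simp add: I_def)
    then show False using CS \<open>A > 0\<close> by simp
  qed
  have "A^2 * 1 < A^2 * (c * I)"
    using CS mult_strict_right_mono[OF \<open>B < c * A^2\<close> \<open>I > 0\<close>] by (simp add: mult_ac)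
  then show ?thesis using \<open>A > 0\<close> unfolding I_def by simp
qed

lemma critical_gopt:
  assumes s: "s = sig \<delta> L \<rho>" and I: "cst \<delta> L * Iopt Q s > 1"
  shows "critical \<delta> L \<rho> Q (gopt Q s)"
proof -
  have "Iopt Q s > 0"
    using I Iopt_nonneg by (cases "Iopt Q s = 0") auto
  then have "Iopt Q s * 1 < Iopt Q s * (cst \<delta> L * Iopt Q s)"
    using I by simp
  then show ?thesis
    unfolding critical_def s[symmetric] EgZ2_gopt EY_gopt_sq by (simp add: power2_eq_square mult_ac)
qed

lemma inf_cond_gopt:
  assumes s: "s = sig \<delta> L \<rho>" and I: "cst \<delta> L * Iopt Q s > 1"
  shows "inf_cond \<delta> L \<rho> Q (gopt Q s)"
  unfolding inf_cond_def gam_def s[symmetric] EgZ2_gopt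
  using I gopt_ge_minus_one by (intro exI[of _ "-1"]) auto

lemma bounded_on_support_if_preproc:
  assumes s: "s = sig \<delta> L \<rho>" and "preproc \<delta> L \<rho> Q g"
  shows "\<exists>K. AE y in lborel. p y > 0 \<longrightarrow> \<bar>g y\<bar> \<le> K"
proof -
  obtain m M where upper: "\<And>y. g y \<le> M" and lower: "\<And>y. y \<in> msupp (lawY Q s) \<Longrightarrow> m \<le> g y"
    using assms unfolding preproc_def inf_cond_def Let_def by blast
  have "AE y in lborel. p y > 0 \<longrightarrow> \<bar>g y\<bar> \<le> \<bar>m\<bar> + \<bar>M\<bar>"
    using AE_in_msupp_lawY
  proof eventually_elim
    case (elim y)
    then show ?case using upper[of y] lower[of y] by auto
  qed
  then show ?thesis ..
qed

lemma one_lt_Iopt_if_preproc_critical: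
  assumes s: "s = sig \<delta> L \<rho>" and pre: "preproc \<delta> L \<rho> Q g" and crit: "critical \<delta> L \<rho> Q g"
  shows "cst \<delta> L * Iopt Q s > 1"
proof -
  obtain K where "AE y in lborel. p y > 0 \<longrightarrow> \<bar>g y\<bar> \<le> K"
    using bounded_on_support_if_preproc[OF s pre] by blast
  moreover have "g \<in> borel_measurable borel" "EY Q s g = 0" "EgZ2 Q s g > 0"
    using pre unfolding preproc_def Let_def s by auto
  ultimately show ?thesis
    using crit unfolding critical_def s[symmetric] by (intro one_lt_Iopt_if_critical) auto
qed

end

theorem mainTheorem2:
  fixes \<delta> \<rho> :: real and L :: "real measure" and Q :: "real \<Rightarrow> real \<Rightarrow> real"
  assumes delta_pos: "\<delta> > 0"
    and rho_pos: "\<rho> > 0"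
    and L_prob: "prob_space L"
    and L_sets: "sets L = sets borel"
    and L_compact: "\<exists>a b. 0 < a \<and> a \<le> b \<and> emeasure L {a..b} = 1"
    and L_var: "prob_space.variance L (\<lambda>l. l) > 0"
    and Q_meas: "(\<lambda>(z, y). Q z y) \<in> borel_measurable borel"
    and Q_nonneg: "\<And>z y. Q z y \<ge> 0"
    and Q_dens: "\<And>z. (\<integral>\<^sup>+ y. ennreal (Q z y) \<partial>lborel) = 1"
  shows
    "(cst \<delta> L * Iopt Q (sig \<delta> L \<rho>) > 1 \<longrightarrow>
        critical \<delta> L \<rho> Q (gopt Q (sig \<delta> L \<rho>)) \<and>
        (EY Q (sig \<delta> L \<rho>) (\<lambda>y. (gopt Q (sig \<delta> L \<rho>) y)^2) > 0 \<longrightarrow>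
           inf_cond \<delta> L \<rho> Q (gopt Q (sig \<delta> L \<rho>)) \<and>
           EY Q (sig \<delta> L \<rho>) (gopt Q (sig \<delta> L \<rho>)) = 0 \<and>
           EgZ2 Q (sig \<delta> L \<rho>) (gopt Q (sig \<delta> L \<rho>)) > 0))
     \<and>
     (\<forall>g. preproc \<delta> L \<rho> Q g \<and> critical \<delta> L \<rho> Q g \<longrightarrow> cst \<delta> L * Iopt Q (sig \<delta> L \<rho>) > 1)"
proof -
  define s where "s = sig \<delta> L \<rho>"
  interpret glm Q s
    using Q_meas Q_nonneg Q_dens by unfold_locales
  show ?thesis
    using critical_gopt[OF s_def] inf_cond_gopt[OF s_def] one_lt_Iopt_if_preproc_critical[OF s_def]
      EY_gopt EgZ2_gopt EY_gopt_sq
    unfolding s_def[symmetric] by auto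
qed

end
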